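(* Let $H$ be a finite-dimensional real Hilbert space and let $A = A_1 + A_2$, where $A_1, A_2: H\to H$ are linear operators with $A_1 = A_2^*$, and $A=A^*>0$. Let $\sigma\ge 1/2$, $\tau>0$, and let $y^0,y^1\in H$ be arbitrary and $\varphi^n\in H$. Let $y^{n+1}$, $n\ge1$, be defined by the three-level (multilevel alternating triangle method) scheme $$(E+\sigma\tau A)\frac{y^{n+1}-y^n}{\tau} + \sigma^2\tau^3 A_1A_2\,\frac{y^{n+1}-2y^n+y^{n-1}}{\tau^2} + A y^n = \varphi^n,\quad n=1,2,\dots .$$ Define $$R = \frac{\tau}{2}E + \sigma^2\tau^3 A_1A_2 + \frac{\tau^2}{4}(2\sigma-1)A,$$ $$\mathcal{E}_{n} = \left\|\frac{y^{n}+y^{n-1}}{2}\right\|_A^2 + \left\|\frac{y^{n}-y^{n-1}}{\tau}\right\|_{R}^2 ,\quad n\ge 1.$$ Then $R$ is self-adjoint and positive definite (so $\mathcal{E}_n$ is a squared norm of the pair of consecutive levels), $E+\sigma\tau A$ is self-adjoint positive definite, and for every $n\ge1$, regardless of $\tau$, $$\mathcal{E}_{n+1} \le \mathcal{E}_n + \frac{\tau}{2}\,\|\varphi^n\|^2_{(E+\sigma\tau A)^{-1}} .$$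
   Context: $H$ has scalar product $(\cdot,\cdot)$ and norm $\|y\|=(y,y)^{1/2}$; $A^*$ denotes the adjoint. For a self-adjoint positive definite operator $D$ on $H$, $\|y\|_D = (Dy,y)^{1/2}$; in particular $\|\varphi\|^2_{(E+\sigma\tau A)^{-1}} = ((E+\sigma\tau A)^{-1}\varphi,\varphi)$. $E$ denotes the identity operator on $H$. *)

theory Defs
  imports "HOL-Analysis.Analysis"
begin

text \<open>A finite-dimensional real Hilbert space is modelled by a type of class euclidean_space.
  Operators are functions; linearity is stated explicitly. Adjoint is the library adjoint.\<close>

definition self_adjoint :: "('a::euclidean_space \<Rightarrow> 'a) \<Rightarrow> bool" where
  "self_adjoint D \<longleftrightarrow> linear D \<and> adjoint D = D"

definition pos_def :: "('a::euclidean_space \<Rightarrow> 'a) \<Rightarrow> bool" where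
  "pos_def D \<longleftrightarrow> (\<forall>x. x \<noteq> 0 \<longrightarrow> inner (D x) x > 0)"

definition dnorm2 :: "('a::euclidean_space \<Rightarrow> 'a) \<Rightarrow> 'a \<Rightarrow> real" where
  "dnorm2 D y = inner (D y) y"

end

theory Submission
  imports Defs
begin

(*
  Write b = y n, v1 = (y n - y (n-1))/tau and v2 = (y (n+1) - y n)/tau for the current level
  and the two neighbouring velocities, C = A1 A2 and B = E + sigma tau A.  Since A1 = A2*,
  C is a symmetric nonnegative Gram operator, so R and B are self-adjoint positive definite.
  The scheme reads  phi = B v2 + sigma^2 tau^2 C (v2 - v1) + A b, and pairing it with the
  mean velocity m = (v1 + v2)/2 yields the exact energy identity
      E (n+1) + 2 tau (B m, m) = E n + 2 tau (phi, m).
  Completing the square in the B-inner product, (phi, m) - (B m, m) <= (B^-1 phi, phi)/4,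
  which gives the stated energy estimate for every tau > 0.

  Of the splitting A = A1 + A2 only
  A1 = A2* enters; A itself is used only through being self-adjoint and positive definite.
*)

lemma self_adjoint_iff_symmetric:
  fixes D :: "'a::euclidean_space \<Rightarrow> 'a"
  assumes "linear D"
  shows "self_adjoint D \<longleftrightarrow> (\<forall>x z. inner (D x) z = inner x (D z))"
  unfolding self_adjoint_def
  by (metis adjoint_unique adjoint_works assms inner_commute)

lemma pos_def_nonneg:
  assumes "pos_def D"
  shows "inner (D x) x \<ge> 0"
  using assms unfolding pos_def_def
  by (metis inner_zero_right order.strict_implies_order order_refl)

lemma gram_operator_inner:
  fixes A2 :: "'a::euclidean_space \<Rightarrow> 'a"
  assumes "linear A2"
  shows "inner (adjoint A2 (A2 x)) z = inner (A2 x) (A2 z)"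
  by (metis adjoint_works assms inner_commute)

lemma pos_def_add_nonneg:
  assumes "pos_def P" and "\<And>x. inner (Q x) x \<ge> 0"
  shows "pos_def (\<lambda>x. P x + Q x)"
  using assms unfolding pos_def_def by (simp add: inner_add_left add_pos_nonneg)

lemma pos_def_scaled_identity:
  assumes "(c::real) > 0"
  shows "pos_def (\<lambda>x. c *\<^sub>R x)"
  using assms unfolding pos_def_def by simp

lemma scheme_operators:
  fixes A C :: "'a::euclidean_space \<Rightarrow> 'a" and \<sigma> \<tau> :: real
  assumes Asa: "self_adjoint A" and Apd: "pos_def A" and lC: "linear C"
    and sC: "\<And>x z. inner (C x) z = inner (C z) x" and Cnn: "\<And>x. inner (C x) x \<ge> 0"
    and sig: "\<sigma> \<ge> 1/2" and tau: "\<tau> > 0"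
  defines "R \<equiv> \<lambda>x. (\<tau>/2) *\<^sub>R x + (\<sigma>^2 * \<tau>^3) *\<^sub>R C x + (\<tau>^2/4 * (2*\<sigma> - 1)) *\<^sub>R A x"
    and "B \<equiv> \<lambda>x. x + (\<sigma>*\<tau>) *\<^sub>R A x"
  shows "self_adjoint R \<and> pos_def R \<and> self_adjoint B \<and> pos_def B"
proof (intro conjI)
  have lA: "linear A" using Asa unfolding self_adjoint_def by blast
  have sA: "\<And>x z. inner (A x) z = inner (A z) x"
    using Asa lA self_adjoint_iff_symmetric inner_commute by metis
  have "linear R" "linear B" unfolding R_def B_def
    by (rule linearI; simp add: linear_add[OF lA] linear_cmul[OF lA]
        linear_add[OF lC] linear_cmul[OF lC] algebra_simps)+
  then show "self_adjoint R" "self_adjoint B"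
    using sA sC by (simp_all add: self_adjoint_iff_symmetric R_def B_def
        inner_add_left inner_add_right inner_commute)
  have "pos_def (\<lambda>x. (\<tau>/2) *\<^sub>R x + (\<sigma>^2 * \<tau>^3) *\<^sub>R C x)"
    using tau Cnn by (intro pos_def_add_nonneg pos_def_scaled_identity) simp_all
  then show "pos_def R" unfolding R_def
    by (rule pos_def_add_nonneg) (use sig pos_def_nonneg[OF Apd] in simp)
  show "pos_def B" unfolding B_def
    using pos_def_scaled_identity[of 1] sig tau pos_def_nonneg[OF Apd]
    by (intro pos_def_add_nonneg) simp_all
qed

text \<open>Completing the square in the B-inner product: for self-adjoint positive definite B,
  the linear form (phi, m) exceeds the quadratic form (B m, m) by at most a quarter of the
  dual energy (B^-1 phi, phi).  Finite dimension makes B invertible.\<close>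
lemma dual_norm_bound:
  fixes B :: "'a::euclidean_space \<Rightarrow> 'a"
  assumes sa: "self_adjoint B" and pd: "pos_def B"
  shows "inner \<phi> m - dnorm2 B m \<le> dnorm2 (inv B) \<phi> / 4"
proof -
  have lin: "linear B" using sa unfolding self_adjoint_def by blast
  have sym: "\<And>x z. inner (B x) z = inner x (B z)"
    using sa lin self_adjoint_iff_symmetric by blast
  have "inj B"
  proof (rule injI)
    fix x z assume "B x = B z"
    hence "B (x - z) = 0" by (simp add: linear_diff[OF lin])
    thus "x = z" using pd unfolding pos_def_def by (metis inner_zero_left less_irrefl right_minus_eq)
  qed
  moreover have "surj B" using lin \<open>inj B\<close> by (rule linear_inj_imp_surj)
  ultimately obtain u where u: "\<phi> = B u" and inv_u: "inv B \<phi> = u"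
    by (metis inv_f_f surj_def)
  have "0 \<le> inner (B (m - (1/2) *\<^sub>R u)) (m - (1/2) *\<^sub>R u)"
    using pd by (rule pos_def_nonneg)
  also have "\<dots> = inner (B m) m - inner (B u) m + inner (B u) u / 4"
    using sym[of m u]
    by (simp add: linear_diff[OF lin] linear_cmul[OF lin] inner_diff_left inner_diff_right
        inner_commute algebra_simps)
  finally show ?thesis
    unfolding dnorm2_def inv_u by (simp add: u inner_commute)
qed

lemma scheme_velocity_form:
  fixes A C :: "'a::real_vector \<Rightarrow> 'a" and a b c :: 'a and \<sigma> \<tau> :: real
  assumes lA: "linear A" and lC: "linear C" and tau: "\<tau> \<noteq> 0"
  defines "v1 \<equiv> (1/\<tau>) *\<^sub>R (b - a)" and "v2 \<equiv> (1/\<tau>) *\<^sub>R (c - b)"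
  shows "(v2 + (\<sigma>*\<tau>) *\<^sub>R A v2) + (\<sigma>^2 * \<tau>^3) *\<^sub>R C ((1/\<tau>^2) *\<^sub>R (c - 2 *\<^sub>R b + a)) + A b
       = v2 + (\<sigma>*\<tau>) *\<^sub>R A v2 + (\<sigma>^2*\<tau>^2) *\<^sub>R C (v2 - v1) + A b"
proof -
  have "(1/\<tau>^2) *\<^sub>R (c - 2 *\<^sub>R b + a) = (1/\<tau>) *\<^sub>R (v2 - v1)"
    unfolding v1_def v2_def using tau
    by (simp add: algebra_simps scaleR_diff_right power2_eq_square)
       (simp add: scaleR_add_left[symmetric])
  moreover have "(\<sigma>^2 * \<tau>^3) *\<^sub>R C ((1/\<tau>) *\<^sub>R (v2 - v1)) = (\<sigma>^2*\<tau>^2) *\<^sub>R C (v2 - v1)"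
    using tau by (simp add: linear_cmul[OF lC] power3_eq_cube power2_eq_square)
  ultimately show ?thesis by simp
qed

text \<open>Pairing the velocity form of the scheme with the mean velocity m = (v1+v2)/2 gives the
  exact balance  E(n+1) + 2 tau (B m, m) = E n + 2 tau (phi, m); symmetry of A and C is all
  that is needed.  Averages of levels are written around the middle level b.\<close>
lemma energy_identity_velocity:
  fixes A C :: "'a::euclidean_space \<Rightarrow> 'a" and \<sigma> \<tau> :: real
  assumes lA: "linear A" and lC: "linear C"
    and sA: "\<And>x z. inner (A x) z = inner (A z) x"
    and sC: "\<And>x z. inner (C x) z = inner (C z) x"
    and phi: "\<phi> = v2 + (\<sigma>*\<tau>) *\<^sub>R A v2 + (\<sigma>^2*\<tau>^2) *\<^sub>R C (v2 - v1) + A b"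
  defines "R \<equiv> \<lambda>x. (\<tau>/2) *\<^sub>R x + (\<sigma>^2 * \<tau>^3) *\<^sub>R C x + (\<tau>^2/4 * (2*\<sigma> - 1)) *\<^sub>R A x"
    and "B \<equiv> \<lambda>x. x + (\<sigma>*\<tau>) *\<^sub>R A x"
    and "m \<equiv> (1/2) *\<^sub>R (v1 + v2)"
  shows "dnorm2 A (b + (\<tau>/2) *\<^sub>R v2) + dnorm2 R v2 + 2*\<tau> * dnorm2 B m
       = dnorm2 A (b - (\<tau>/2) *\<^sub>R v1) + dnorm2 R v1 + 2*\<tau> * inner \<phi> m"
proof -
  have s: "inner (A v1) b = inner (A b) v1" "inner (A v2) b = inner (A b) v2"
     "inner (A v2) v1 = inner (A v1) v2" "inner (C v2) v1 = inner (C v1) v2"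
     "inner v2 v1 = inner v1 v2"
    using sA sC inner_commute by metis+
  show ?thesis
    unfolding phi dnorm2_def R_def B_def m_def
    by (simp add: linear_add[OF lA] linear_diff[OF lA] linear_cmul[OF lA]
        linear_add[OF lC] linear_diff[OF lC] linear_cmul[OF lC]
        inner_add_left inner_add_right inner_diff_left inner_diff_right s
        algebra_simps power2_eq_square power3_eq_cube)
       (simp add: field_simps)
qed

lemma energy_identity:
  fixes A C :: "'a::euclidean_space \<Rightarrow> 'a" and a b c :: 'a and \<sigma> \<tau> :: real
  assumes lA: "linear A" and lC: "linear C"
    and sA: "\<And>x z. inner (A x) z = inner (A z) x"
    and sC: "\<And>x z. inner (C x) z = inner (C z) x"
    and tau: "\<tau> \<noteq> 0"
  defines "v1 \<equiv> (1/\<tau>) *\<^sub>R (b - a)" and "v2 \<equiv> (1/\<tau>) *\<^sub>R (c - b)"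
    and "R \<equiv> \<lambda>x. (\<tau>/2) *\<^sub>R x + (\<sigma>^2 * \<tau>^3) *\<^sub>R C x + (\<tau>^2/4 * (2*\<sigma> - 1)) *\<^sub>R A x"
    and "B \<equiv> \<lambda>x. x + (\<sigma>*\<tau>) *\<^sub>R A x"
  assumes phi: "\<phi> = v2 + (\<sigma>*\<tau>) *\<^sub>R A v2 + (\<sigma>^2*\<tau>^2) *\<^sub>R C (v2 - v1) + A b"
  shows "dnorm2 A ((1/2) *\<^sub>R (c + b)) + dnorm2 R v2
       = dnorm2 A ((1/2) *\<^sub>R (b + a)) + dnorm2 R v1
         + 2*\<tau> * (inner \<phi> ((1/2) *\<^sub>R (v1 + v2)) - dnorm2 B ((1/2) *\<^sub>R (v1 + v2)))"
proof -
  have "(1/2) *\<^sub>R (c + b) = b + (\<tau>/2) *\<^sub>R v2" "(1/2) *\<^sub>R (b + a) = b - (\<tau>/2) *\<^sub>R v1"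
    unfolding v1_def v2_def using tau
    by (simp_all add: algebra_simps scaleR_diff_right) (simp_all add: scaleR_add_left[symmetric])
  with energy_identity_velocity[OF lA lC sA sC phi] show ?thesis
    unfolding R_def B_def by (simp add: right_diff_distrib)
qed

theorem theorem3:
  fixes A A1 A2 :: "'a::euclidean_space \<Rightarrow> 'a"
    and \<sigma> \<tau> :: real
    and y \<phi> :: "nat \<Rightarrow> 'a"
  assumes lin1: "linear A1" and lin2: "linear A2"
    and adj: "A1 = adjoint A2"
    and Adef: "A = (\<lambda>x. A1 x + A2 x)"
    and Asa: "self_adjoint A" and Apd: "pos_def A"
    and sig: "\<sigma> \<ge> 1/2" and tau: "\<tau> > 0"
    and scheme: "\<And>n. n \<ge> 1 \<Longrightarrow>
        (scaleR (1/\<tau>) (y (Suc n) - y n) + scaleR (\<sigma>*\<tau>) (A (scaleR (1/\<tau>) (y (Suc n) - y n))))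
        + scaleR (\<sigma>^2 * \<tau>^3) (A1 (A2 (scaleR (1/\<tau>^2) (y (Suc n) - 2 *\<^sub>R y n + y (n - 1)))))
        + A (y n) = \<phi> n"
  shows "let B = (\<lambda>x. x + scaleR (\<sigma>*\<tau>) (A x));
             R = (\<lambda>x. scaleR (\<tau>/2) x + scaleR (\<sigma>^2 * \<tau>^3) (A1 (A2 x))
                       + scaleR (\<tau>^2/4 * (2*\<sigma> - 1)) (A x));
             \<E> = (\<lambda>n. dnorm2 A (scaleR (1/2) (y n + y (n - 1)))
                       + dnorm2 R (scaleR (1/\<tau>) (y n - y (n - 1))))
         in self_adjoint R \<and> pos_def R \<and> self_adjoint B \<and> pos_def B \<and>
            (\<forall>n\<ge>1. \<E> (Suc n) \<le> \<E> n + \<tau>/2 * dnorm2 (inv B) (\<phi> n))"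
proof -
  define C where "C = (\<lambda>x. A1 (A2 x))"
  define B where "B = (\<lambda>x. x + (\<sigma>*\<tau>) *\<^sub>R A x)"
  define R where "R = (\<lambda>x. (\<tau>/2) *\<^sub>R x + (\<sigma>^2 * \<tau>^3) *\<^sub>R C x + (\<tau>^2/4 * (2*\<sigma> - 1)) *\<^sub>R A x)"
  define \<E> where "\<E> = (\<lambda>n. dnorm2 A ((1/2) *\<^sub>R (y n + y (n - 1))) + dnorm2 R ((1/\<tau>) *\<^sub>R (y n - y (n - 1))))"
  have lA: "linear A" using Asa unfolding self_adjoint_def by blast
  have sA: "\<And>x z. inner (A x) z = inner (A z) x"
    using Asa lA self_adjoint_iff_symmetric inner_commute by metis
  have lC: "linear C" unfolding C_def using linear_compose[OF lin2 lin1] by (simp add: o_def)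
  have gram: "\<And>x z. inner (C x) z = inner (A2 x) (A2 z)"
    unfolding C_def adj using gram_operator_inner[OF lin2] .
  have sC: "\<And>x z. inner (C x) z = inner (C z) x" using gram inner_commute by metis
  have ops: "self_adjoint R \<and> pos_def R \<and> self_adjoint B \<and> pos_def B"
    unfolding R_def B_def using scheme_operators[OF Asa Apd lC sC _ sig tau] gram by simp
  hence saB: "self_adjoint B" and pdB: "pos_def B" by blast+
  have "\<E> (Suc n) \<le> \<E> n + \<tau>/2 * dnorm2 (inv B) (\<phi> n)" if n: "n \<ge> 1" for n
  proof -
    let ?m = "(1/2) *\<^sub>R ((1/\<tau>) *\<^sub>R (y n - y (n - 1)) + (1/\<tau>) *\<^sub>R (y (Suc n) - y n))"
    have "\<phi> n = (1/\<tau>) *\<^sub>R (y (Suc n) - y n) + (\<sigma>*\<tau>) *\<^sub>R A ((1/\<tau>) *\<^sub>R (y (Suc n) - y n))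
        + (\<sigma>^2*\<tau>^2) *\<^sub>R C ((1/\<tau>) *\<^sub>R (y (Suc n) - y n) - (1/\<tau>) *\<^sub>R (y n - y (n - 1))) + A (y n)"
      using scheme[OF n] scheme_velocity_form[OF lA lC, of \<tau>] tau unfolding C_def by simp
    from energy_identity[OF lA lC sA sC _ this] tau
    have "\<E> (Suc n) = \<E> n + 2*\<tau> * (inner (\<phi> n) ?m - dnorm2 B ?m)"
      unfolding \<E>_def R_def B_def by simp
    also have "\<dots> \<le> \<E> n + 2*\<tau> * (dnorm2 (inv B) (\<phi> n) / 4)"
      using tau by (intro add_left_mono mult_left_mono dual_norm_bound[OF saB pdB]) simp
    finally show ?thesis by simp
  qed
  with ops show ?thesis
    unfolding Let_def \<E>_def B_def R_def C_def by blast
qed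

end
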